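(* Let $p=2$ and let $a,b\in\mathbb{C}_2$ with $a\neq0$, $b\neq0$, $a\neq b$ and $|2a|_2>|b|_2$. Let $P=-\frac1b$, $D=\mathbb{C}_2\setminus\{P\}$, $f(x)=\frac{ax^2}{bx+1}$ on $D$, $x_1=0$, $x_2=\frac1{a-b}$, and $r_1=\frac1{|a|_2}$. Then $x_1$ and $x_2$ are attracting fixed points of $f$, and $$A(x_1)=B_{r_1}(x_1),\qquad A(x_2)=B_{r_1}(x_2).$$
   Context: $\mathbb{C}_2$ is the field of complex $2$-adic numbers with $2$-adic norm $|\cdot|_2$. For $c\in\mathbb{C}_2$, $r>0$: $B_r(c)=\{x:|x-c|_2<r\}$. For $y\in D$, $y^{(n)}=f^n(y)$ is the $n$-th iterate (defined as long as no earlier iterate equals $P$). A fixed point $x^{(0)}$ of $f$ is attracting if $|f'(x^{(0)})|_2<1$. Its basin of attraction is $A(x^{(0)})=\{y: y^{(n)}\text{ defined for all }n,\ y^{(n)}\to x^{(0)}\}$. *)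

theory Defs
  imports Complex_Main "HOL-Computational_Algebra.Polynomial"
begin

(* A field 'a together with a map nv :: 'a => real which is (up to isometric
   isomorphism) the field C_2 of complex 2-adic numbers with |.|_2:
   a non-archimedean absolute value with |2| = 1/2, complete, algebraically
   closed, and in which the algebraic numbers (roots of nonzero integer
   polynomials) are dense. *)

definition nv_conv :: "('a::field \<Rightarrow> real) \<Rightarrow> (nat \<Rightarrow> 'a) \<Rightarrow> 'a \<Rightarrow> bool" where
  "nv_conv nv X L \<longleftrightarrow> (\<forall>\<epsilon>>0. \<exists>N. \<forall>n\<ge>N. nv (X n - L) < \<epsilon>)"

definition nv_cauchy :: "('a::field \<Rightarrow> real) \<Rightarrow> (nat \<Rightarrow> 'a) \<Rightarrow> bool" where
  "nv_cauchy nv X \<longleftrightarrow> (\<forall>\<epsilon>>0. \<exists>N. \<forall>m\<ge>N. \<forall>n\<ge>N. nv (X m - X n) < \<epsilon>)"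

definition complex_2adic :: "('a::field \<Rightarrow> real) \<Rightarrow> bool" where
  "complex_2adic nv \<longleftrightarrow>
     (\<forall>x. nv x \<ge> 0) \<and> (\<forall>x. nv x = 0 \<longleftrightarrow> x = 0) \<and>
     (\<forall>x y. nv (x * y) = nv x * nv y) \<and>
     (\<forall>x y. nv (x + y) \<le> max (nv x) (nv y)) \<and>
     nv 2 = 1/2 \<and>
     (\<forall>X. nv_cauchy nv X \<longrightarrow> (\<exists>L. nv_conv nv X L)) \<and>
     (\<forall>p::'a poly. degree p > 0 \<longrightarrow> (\<exists>x. poly p x = 0)) \<and>
     (\<forall>x \<epsilon>. \<epsilon> > 0 \<longrightarrow> (\<exists>y. (\<exists>q::int poly. q \<noteq> 0 \<and> poly (map_poly of_int q) y = 0)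
                                 \<and> nv (x - y) < \<epsilon>))"

definition nv_ball :: "('a::field \<Rightarrow> real) \<Rightarrow> 'a \<Rightarrow> real \<Rightarrow> 'a set" where
  "nv_ball nv c r = {x. nv (x - c) < r}"

definition nv_has_deriv :: "('a::field \<Rightarrow> real) \<Rightarrow> ('a \<Rightarrow> 'a) \<Rightarrow> 'a \<Rightarrow> 'a \<Rightarrow> bool" where
  "nv_has_deriv nv f x d \<longleftrightarrow>
     (\<forall>\<epsilon>>0. \<exists>\<delta>>0. \<forall>y. y \<noteq> x \<and> nv (y - x) < \<delta> \<longrightarrow> nv ((f y - f x) / (y - x) - d) < \<epsilon>)"

definition attracting_fixed_point ::
  "('a::field \<Rightarrow> real) \<Rightarrow> ('a \<Rightarrow> 'a) \<Rightarrow> 'a \<Rightarrow> 'a \<Rightarrow> bool" where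
  "attracting_fixed_point nv f P x0 \<longleftrightarrow>
     x0 \<noteq> P \<and> f x0 = x0 \<and> (\<exists>d. nv_has_deriv nv f x0 d \<and> nv d < 1)"

(* basin of attraction: all iterates defined (never hit the pole P) and converge to x0 *)
definition basin :: "('a::field \<Rightarrow> real) \<Rightarrow> ('a \<Rightarrow> 'a) \<Rightarrow> 'a \<Rightarrow> 'a \<Rightarrow> 'a set" where
  "basin nv f P x0 = {y. (\<forall>n. (f ^^ n) y \<noteq> P) \<and> nv_conv nv (\<lambda>n. (f ^^ n) y) x0}"

end

theory Submission
  imports Defs
begin

(* Around a fixed point x of f(z) = a z^2/(b z + 1) one has
     f(z) - x = a (z - x)(z - x + c) / (b z + 1)
   with |c| < 1/|a| and |b x + 1| = 1 (c = 0 for x = 0, and c = x + 1/a = (2a - b)/(a(a - b))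
   for x = 1/(a - b), where |c| = |2a|/|a|^2 < 1/|a| because |2| < 1).  Inside the ball
   |z - x| < 1/|a| the denominator has norm 1, so |f(z) - x| = |a| |z - x| |z - x + c| is a
   contraction towards x.  Outside it, |z - x + c| = |z - x| and
   |b z + 1| <= max (|b| |z - x|) 1 <= |a| |z - x|, hence |f(z) - x| >= |z - x|: orbits
   starting outside the ball never come closer to x. *)

locale nonarchimedean_abs =
  fixes nv :: "'a::field \<Rightarrow> real"
  assumes norm_nonneg: "nv x \<ge> 0"
    and norm_eq_zero_iff: "nv x = 0 \<longleftrightarrow> x = 0"
    and norm_mult: "nv (x * y) = nv x * nv y"
    and norm_add_le_max: "nv (x + y) \<le> max (nv x) (nv y)"
begin

lemma norm_one: "nv 1 = 1"
proof -
  have "nv 1 * nv 1 = nv 1 * 1" using norm_mult[of 1 1] by simp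
  moreover have "nv 1 \<noteq> 0" using norm_eq_zero_iff[of 1] by simp
  ultimately show ?thesis by (metis mult_left_cancel)
qed

lemma norm_minus: "nv (- x) = nv x"
proof -
  have "nv (-1) * nv (-1) = 1" using norm_mult[of "-1" "-1"] norm_one by simp
  then have "(nv (-1) - 1) * (nv (-1) + 1) = 0" by (simp add: algebra_simps)
  moreover have "nv (-1) + 1 \<noteq> 0" using norm_nonneg[of "-1"] by linarith
  ultimately have "nv (-1) = 1" by simp
  then show ?thesis using norm_mult[of "-1" x] by simp
qed

lemma norm_divide: "nv (x / y) = nv x / nv y"
proof (cases "y = 0")
  case False
  then have "nv (x / y) * nv y = nv x" using norm_mult[of "x / y" y] by simp
  with False show ?thesis using norm_eq_zero_iff[of y] by (simp add: eq_divide_eq)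
next
  case True
  moreover have "nv 0 = 0" using norm_eq_zero_iff by blast
  ultimately show ?thesis by simp
qed

lemma norm_pos: "x \<noteq> 0 \<Longrightarrow> nv x > 0"
  using norm_nonneg[of x] norm_eq_zero_iff[of x] by linarith

lemma norm_add_eq_of_less:
  assumes "nv x < nv y"
  shows "nv (x + y) = nv y"
proof -
  have "nv y \<le> max (nv (x + y)) (nv (- x))" using norm_add_le_max[of "x + y" "- x"] by simp
  then have "nv y \<le> nv (x + y)" using assms norm_minus[of x] by linarith
  then show ?thesis using norm_add_le_max[of x y] assms by linarith
qed

lemma iterates_contract:
  assumes "0 \<le> t" "t \<le> 1" "nv (y - c) \<le> d"
    and contract: "\<And>z. nv (z - c) \<le> d \<Longrightarrow> nv (f z - c) \<le> t * nv (z - c)"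
  shows "nv ((f ^^ n) y - c) \<le> t ^ n * nv (y - c)"
proof (induction n)
  case (Suc n)
  have "t ^ n * nv (y - c) \<le> nv (y - c)"
    using assms(1,2) norm_nonneg[of "y - c"] by (simp add: mult_left_le_one_le power_le_one)
  then have "nv (f ((f ^^ n) y) - c) \<le> t * nv ((f ^^ n) y - c)"
    using Suc assms(3) by (intro contract) linarith
  also have "\<dots> \<le> t * (t ^ n * nv (y - c))" using Suc assms(1) by (rule mult_left_mono)
  finally show ?case by simp
qed simp

lemma nv_conv_iterates_if_contract:
  assumes "0 \<le> t" "t < 1" "nv (y - c) \<le> d"
    and contract: "\<And>z. nv (z - c) \<le> d \<Longrightarrow> nv (f z - c) \<le> t * nv (z - c)"
  shows "nv_conv nv (\<lambda>n. (f ^^ n) y) c"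
  unfolding nv_conv_def
proof (intro allI impI)
  fix \<epsilon> :: real assume "\<epsilon> > 0"
  moreover have "(\<lambda>n. t ^ n * nv (y - c)) \<longlonglongrightarrow> 0"
    using assms(1,2) by (simp add: LIMSEQ_power_zero tendsto_mult_left_zero)
  ultimately obtain N where "\<forall>n\<ge>N. t ^ n * nv (y - c) < \<epsilon>"
    by (metis eventually_sequentially order_tendstoD(2))
  then show "\<exists>N. \<forall>n\<ge>N. nv ((f ^^ n) y - c) < \<epsilon>"
    using iterates_contract[OF assms(1) _ assms(3) contract] assms(2) by (meson less_imp_le order_le_less_trans)
qed

end

lemma not_nv_conv_iterates_if_escape:
  assumes "0 < r" "r \<le> nv (y - c)" "\<forall>n. (f ^^ n) y \<noteq> P"
    and escape: "\<And>z. z \<noteq> P \<Longrightarrow> r \<le> nv (z - c) \<Longrightarrow> r \<le> nv (f z - c)"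
  shows "\<not> nv_conv nv (\<lambda>n. (f ^^ n) y) c"
proof
  have far: "r \<le> nv ((f ^^ n) y - c)" for n
    by (induction n) (use assms in auto)
  assume "nv_conv nv (\<lambda>n. (f ^^ n) y) c"
  then obtain N where "\<forall>n\<ge>N. nv ((f ^^ n) y - c) < r" using assms(1) unfolding nv_conv_def by blast
  then show False using far[of N] by auto
qed

locale quadratic_fixed_point = nonarchimedean_abs nv for nv :: "'a::field \<Rightarrow> real" +
  fixes a b c x :: 'a
  assumes b_nonzero: "b \<noteq> 0"
    and norm_b_less: "nv b < nv a"
    and norm_c_less: "nv c < 1 / nv a"
    and norm_denom_at_fixed: "nv (b * x + 1) = 1"
    and factorization: "\<And>z. a * z ^ 2 - x * (b * z + 1) = a * (z - x) * (z - x + c)"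
begin

abbreviation quad_map :: "'a \<Rightarrow> 'a" where
  "quad_map \<equiv> \<lambda>z. a * z ^ 2 / (b * z + 1)"

abbreviation pole :: 'a where
  "pole \<equiv> - 1 / b"

lemma norm_a_pos: "nv a > 0"
  using norm_b_less norm_nonneg[of b] by linarith

lemma denom_nonzero_iff: "b * z + 1 \<noteq> 0 \<longleftrightarrow> z \<noteq> pole"
proof -
  have "b * z + 1 = b * (z - pole)" using b_nonzero by (simp add: algebra_simps)
  then show ?thesis using b_nonzero by (metis eq_iff_diff_eq_0 mult_eq_0_iff)
qed

lemma quad_map_minus_fixed:
  assumes "z \<noteq> pole"
  shows "quad_map z - x = a * (z - x) * (z - x + c) / (b * z + 1)"
proof -
  have "b * z + 1 \<noteq> 0" using assms denom_nonzero_iff by blast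
  then have "quad_map z - x = (a * z ^ 2 - x * (b * z + 1)) / (b * z + 1)"
    by (simp add: diff_divide_distrib)
  then show ?thesis using factorization by simp
qed

lemma fixed_ne_pole: "x \<noteq> pole"
  using norm_denom_at_fixed denom_nonzero_iff[of x] norm_eq_zero_iff[of 0] by force

lemma quad_map_fixed: "quad_map x = x"
  using quad_map_minus_fixed[OF fixed_ne_pole] by simp

lemma norm_denom_near:
  assumes "nv (z - x) < 1 / nv a"
  shows "nv (b * z + 1) = 1"
proof -
  have "nv (b * (z - x)) \<le> nv a * nv (z - x)"
    using norm_b_less norm_nonneg[of "z - x"] by (simp add: norm_mult mult_right_mono)
  also have "\<dots> < 1" using assms norm_a_pos by (simp add: field_simps)
  finally have "nv (b * (z - x) + (b * x + 1)) = 1"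
    using norm_add_eq_of_less norm_denom_at_fixed by simp
  then show ?thesis by (simp add: algebra_simps)
qed

lemma norm_quad_map_near:
  assumes "nv (z - x) < 1 / nv a"
  shows "z \<noteq> pole" and "nv (quad_map z - x) = nv a * nv (z - x) * nv (z - x + c)"
proof -
  have denom: "nv (b * z + 1) = 1" by (rule norm_denom_near[OF assms])
  then have "b * z + 1 \<noteq> 0" using norm_eq_zero_iff[of "b * z + 1"] by auto
  then show "z \<noteq> pole" using denom_nonzero_iff by blast
  from quad_map_minus_fixed[OF this]
  have "nv (quad_map z - x) = nv (a * (z - x) * (z - x + c)) / nv (b * z + 1)"
    by (simp only: norm_divide)
  then show "nv (quad_map z - x) = nv a * nv (z - x) * nv (z - x + c)"
    by (simp only: denom norm_mult div_by_1)
qed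

lemma norm_quad_map_far:
  assumes "z \<noteq> pole" "1 / nv a \<le> nv (z - x)"
  shows "nv (z - x) \<le> nv (quad_map z - x)"
proof -
  define u where "u = nv (z - x)"
  define D where "D = nv (b * z + 1)"
  have u_pos: "u > 0"
    using assms(2) norm_a_pos unfolding u_def by (meson divide_pos_pos order_less_le_trans zero_less_one)
  have a_u: "1 \<le> nv a * u" using assms(2) norm_a_pos by (simp add: u_def field_simps)
  have D_pos: "D > 0" using assms(1) denom_nonzero_iff norm_pos by (simp add: D_def)
  have "nv (z - x + c) = u"
    using norm_add_eq_of_less[of c "z - x"] assms(2) norm_c_less by (simp add: u_def add.commute)
  then have norm_quad_map: "nv (quad_map z - x) = nv a * u * u / D"
    using quad_map_minus_fixed[OF assms(1)] by (simp add: norm_divide norm_mult u_def D_def)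
  have "b * z + 1 = b * (z - x) + (b * x + 1)" by (simp add: algebra_simps)
  then have "D \<le> max (nv b * u) 1"
    using norm_add_le_max[of "b * (z - x)" "b * x + 1"] norm_denom_at_fixed
    by (simp only: D_def u_def norm_mult)
  also have "\<dots> \<le> nv a * u" using norm_b_less u_pos a_u by auto
  finally show ?thesis
    unfolding norm_quad_map u_def[symmetric] using D_pos u_pos by (simp add: field_simps)
qed

lemma basin_eq_ball: "basin nv quad_map pole x = nv_ball nv x (1 / nv a)"
proof (intro set_eqI iffI)
  fix y assume y: "y \<in> basin nv quad_map pole x"
  show "y \<in> nv_ball nv x (1 / nv a)"
  proof (rule ccontr)
    assume "y \<notin> nv_ball nv x (1 / nv a)"
    then have "\<not> nv_conv nv (\<lambda>n. (quad_map ^^ n) y) x"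
      using y norm_a_pos norm_quad_map_far
      by (intro not_nv_conv_iterates_if_escape[where P = pole and r = "1 / nv a"])
        (force simp: basin_def nv_ball_def)+
    with y show False by (simp add: basin_def)
  qed
next
  fix y assume "y \<in> nv_ball nv x (1 / nv a)"
  then have d: "nv (y - x) < 1 / nv a" by (simp add: nv_ball_def)
  define t where "t = nv a * max (nv (y - x)) (nv c)"
  have t: "0 \<le> t" "t < 1"
    using d norm_c_less norm_a_pos norm_nonneg[of c] by (auto simp: t_def field_simps)
  have contract: "nv (quad_map z - x) \<le> t * nv (z - x)" if "nv (z - x) \<le> nv (y - x)" for z
  proof -
    have "nv (z - x + c) \<le> max (nv (y - x)) (nv c)"
      using norm_add_le_max[of "z - x" c] that by linarith
    then show ?thesis
      using norm_quad_map_near(2)[of z] that d norm_a_pos norm_nonneg[of "z - x"]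
      by (simp add: t_def mult_left_mono mult_right_mono mult.commute mult.left_commute)
  qed
  have "(quad_map ^^ n) y \<noteq> pole" for n
  proof -
    have "nv ((quad_map ^^ n) y - x) \<le> t ^ n * nv (y - x)"
      using t by (intro iterates_contract[OF _ _ order_refl contract]) auto
    also have "\<dots> \<le> nv (y - x)"
      using t norm_nonneg[of "y - x"] by (simp add: mult_left_le_one_le power_le_one)
    finally show ?thesis using d by (intro norm_quad_map_near(1)) linarith
  qed
  moreover have "nv_conv nv (\<lambda>n. (quad_map ^^ n) y) x"
    using t by (intro nv_conv_iterates_if_contract[OF _ _ order_refl contract])
  ultimately show "y \<in> basin nv quad_map pole x" by (simp add: basin_def)
qed

lemma difference_quotient_minus_deriv:
  assumes "z \<noteq> pole" "z \<noteq> x"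
  shows "(quad_map z - quad_map x) / (z - x) - a * c / (b * x + 1)
           = a * (z - x) * (b * x + 1 - c * b) / ((b * z + 1) * (b * x + 1))"
proof -
  have denoms: "b * z + 1 \<noteq> 0" "b * x + 1 \<noteq> 0"
    using assms(1) fixed_ne_pole denom_nonzero_iff by blast+
  have "(quad_map z - quad_map x) / (z - x) - a * c / (b * x + 1)
          = a * (z - x) * (z - x + c) / (b * z + 1) / (z - x) - a * c / (b * x + 1)"
    by (simp only: quad_map_fixed quad_map_minus_fixed[OF assms(1)])
  also have "\<dots> = a * (z - x + c) / (b * z + 1) - a * c / (b * x + 1)" using assms(2) by simp
  also have "\<dots> = a * (z - x) * (b * x + 1 - c * b) / ((b * z + 1) * (b * x + 1))"
    using denoms by (simp add: field_simps)
  finally show ?thesis .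
qed

lemma norm_deriv_less_one: "nv (a * c / (b * x + 1)) < 1"
proof -
  have "nv (a * c / (b * x + 1)) = nv a * nv c"
    by (simp add: norm_divide norm_mult norm_denom_at_fixed)
  also have "\<dots> < 1" using norm_c_less norm_a_pos by (simp add: field_simps)
  finally show ?thesis .
qed

lemma has_deriv_at_fixed: "nv_has_deriv nv quad_map x (a * c / (b * x + 1))"
  unfolding nv_has_deriv_def
proof (intro allI impI)
  fix \<epsilon> :: real assume "\<epsilon> > 0"
  have bound: "nv ((quad_map z - quad_map x) / (z - x) - a * c / (b * x + 1)) \<le> nv a * nv (z - x)"
    if "z \<noteq> x" "nv (z - x) < 1 / nv a" for z
  proof -
    have "nv (c * b) \<le> nv c * nv a"
      using norm_b_less norm_nonneg[of c] by (simp add: norm_mult mult_left_mono)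
    also have "\<dots> < 1" using norm_c_less norm_a_pos by (simp add: field_simps)
    finally have "nv (b * x + 1 + - (c * b)) \<le> 1"
      using norm_add_le_max[of "b * x + 1" "- (c * b)"] norm_denom_at_fixed norm_minus by simp
    then have "nv (a * (z - x) * (b * x + 1 - c * b)) \<le> nv a * nv (z - x)"
      using norm_a_pos norm_nonneg[of "z - x"] by (simp add: norm_mult mult_left_le)
    then show ?thesis
      using difference_quotient_minus_deriv[OF norm_quad_map_near(1)[OF that(2)] that(1)]
        norm_denom_near[OF that(2)] norm_denom_at_fixed
      by (simp add: norm_divide norm_mult)
  qed
  show "\<exists>\<delta>>0. \<forall>z. z \<noteq> x \<and> nv (z - x) < \<delta> \<longrightarrow>
          nv ((quad_map z - quad_map x) / (z - x) - a * c / (b * x + 1)) < \<epsilon>"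
  proof (intro exI[of _ "min (\<epsilon> / nv a) (1 / nv a)"] conjI allI impI)
    show "min (\<epsilon> / nv a) (1 / nv a) > 0" using \<open>\<epsilon> > 0\<close> norm_a_pos by simp
    fix z assume z: "z \<noteq> x \<and> nv (z - x) < min (\<epsilon> / nv a) (1 / nv a)"
    then have "nv a * nv (z - x) < \<epsilon>" using norm_a_pos by (simp add: field_simps)
    with z bound show "nv ((quad_map z - quad_map x) / (z - x) - a * c / (b * x + 1)) < \<epsilon>"
      by (meson min_less_iff_conj order_le_less_trans)
  qed
qed

lemma attracting: "attracting_fixed_point nv quad_map pole x"
  unfolding attracting_fixed_point_def
  using fixed_ne_pole quad_map_fixed has_deriv_at_fixed norm_deriv_less_one by blast

end

lemma complex_2adic_nonarchimedean: "complex_2adic nv \<Longrightarrow> nonarchimedean_abs nv"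
  unfolding complex_2adic_def nonarchimedean_abs_def by blast

lemma (in nonarchimedean_abs) quadratic_fixed_point_zero:
  assumes "b \<noteq> 0" "nv b < nv a"
  shows "quadratic_fixed_point nv a b 0 0"
proof -
  have "nv 0 = 0" using norm_eq_zero_iff by blast
  moreover have "nv a > 0" using assms(2) norm_nonneg[of b] by linarith
  ultimately show ?thesis
    using assms by unfold_locales (simp_all add: norm_one power2_eq_square)
qed

lemma (in nonarchimedean_abs) quadratic_fixed_point_nonzero:
  assumes "nv 2 < 1" "b \<noteq> 0" "nv b < nv (2 * a)"
  shows "quadratic_fixed_point nv a b (1 / (a - b) + 1 / a) (1 / (a - b))"
proof -
  have a_nonzero: "a \<noteq> 0"
  proof
    assume "a = 0"
    then have "nv (2 * a) = 0" using norm_eq_zero_iff by simp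
    with assms(3) norm_nonneg[of b] show False by linarith
  qed
  have norm_2a: "nv (2 * a) < nv a"
    using assms(1) norm_pos[OF a_nonzero] by (simp add: norm_mult)
  then have norm_b: "nv b < nv a" using assms(3) by linarith
  have norm_a_b: "nv (a - b) = nv a"
    using norm_add_eq_of_less[of "- b" a] norm_minus norm_b by simp
  have ab: "a - b \<noteq> 0" using norm_b by auto
  have "nv (2 * a - b) = nv (2 * a)"
    using norm_add_eq_of_less[of "- b" "2 * a"] norm_minus assms(3) by simp
  moreover have "1 / (a - b) + 1 / a = (2 * a - b) / (a * (a - b))"
    using a_nonzero ab by (simp add: field_simps)
  ultimately have "nv (1 / (a - b) + 1 / a) = nv (2 * a) / (nv a * nv a)"
    by (simp add: norm_divide norm_mult norm_a_b)
  also have "\<dots> < 1 / nv a" using norm_2a norm_pos[OF a_nonzero] by (simp add: field_simps)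
  finally have norm_c: "nv (1 / (a - b) + 1 / a) < 1 / nv a" .
  have "b * (1 / (a - b)) + 1 = a / (a - b)" using ab by (simp add: field_simps)
  then have norm_denom: "nv (b * (1 / (a - b)) + 1) = 1"
    using norm_a_b norm_pos[OF a_nonzero] by (simp add: norm_divide)
  have factorization: "a * z ^ 2 - x * (b * z + 1) = a * (z - x) * (z - x + (x + 1 / a))"
    if "x * (a - b) = 1" for x z
  proof -
    have "a * (z - x) * (z - x + (x + 1 / a)) = (z - x) * (a * z + 1)"
      using a_nonzero by (simp add: field_simps)
    also have "\<dots> = a * z ^ 2 - x * (b * z + 1) + z * (1 - x * (a - b))"
      by (simp add: algebra_simps power2_eq_square)
    finally show ?thesis using that by simp
  qed
  show ?thesis
    using assms(2) norm_b norm_c norm_denom factorization[of "1 / (a - b)"] ab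
    by unfold_locales simp_all
qed

theorem theorem3p8:
  fixes nv :: "'a::field \<Rightarrow> real" and a b :: 'a
  assumes "complex_2adic nv"
    and "a \<noteq> 0" "b \<noteq> 0" "a \<noteq> b"
    and "nv (2 * a) > nv b"
  defines "P \<equiv> - 1 / b"
    and "f \<equiv> (\<lambda>x. a * x ^ 2 / (b * x + 1))"
    and "x1 \<equiv> 0"
    and "x2 \<equiv> 1 / (a - b)"
    and "r1 \<equiv> 1 / nv a"
  shows "attracting_fixed_point nv f P x1 \<and> attracting_fixed_point nv f P x2 \<and>
         basin nv f P x1 = nv_ball nv x1 r1 \<and> basin nv f P x2 = nv_ball nv x2 r1"
proof -
  interpret nonarchimedean_abs nv using assms(1) by (rule complex_2adic_nonarchimedean)
  have norm_2: "nv 2 < 1" using assms(1) by (simp add: complex_2adic_def)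
  have fp2: "quadratic_fixed_point nv a b (1 / (a - b) + 1 / a) x2"
    unfolding x2_def using quadratic_fixed_point_nonzero[OF norm_2 assms(3,5)] .
  then have "nv b < nv a" by (rule quadratic_fixed_point.norm_b_less)
  then have fp1: "quadratic_fixed_point nv a b 0 x1"
    unfolding x1_def using quadratic_fixed_point_zero assms(3) by blast
  show ?thesis
    unfolding f_def P_def r1_def
    using fp1 fp2 quadratic_fixed_point.attracting quadratic_fixed_point.basin_eq_ball by blast
qed

end
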